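(* Let $\mathbf v\in\mathbb R^{n\times m}_{<0}$, $\mathbf b\in\mathbb R^n_{<0}$, and let $\mathbf z$ be an allocation. The following are equivalent: (1) $\mathbf z$ is competitive for $(\mathbf v,\mathbf b)$; (2) $\mathbf u(\mathbf z)\in\mathbb R^n_{<0}$ and $z_{i,j}>0$ implies $\frac{v_{i,j}b_i}{u_i(\mathbf z_i)}\ge\frac{v_{i',j}b_{i'}}{u_{i'}(\mathbf z_{i'})}$ for all $i'\in[n]$; (3) $\mathbf u(\mathbf z)\in\mathbb R^n_{<0}$ and $\mathbf y=\mathbf z$ maximizes $W_\tau(\mathbf y)=\sum_i\tau_iu_i(\mathbf y_i)$ over all allocations $\mathbf y$, where $\tau_i=b_i/u_i(\mathbf z_i)$; (4) $\mathbf u(\mathbf z)\in\mathbb R^n_{<0}$, $\mathbf u(\mathbf z)$ lies on the Pareto frontier $\mathcal U^*(\mathbf v)$, and $\mathbf u(\mathbf z)$ is a critical point of the Nash product $\mathcal N_{\mathbf b}(\mathbf u)=\prod_i|u_i|^{|b_i|}$ on $\mathcal U(\mathbf v)$.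
   Context: Agents $[n]$, chores $[m]$, allocations $\mathbf z\in\mathbb R^{n\times m}_{\ge0}$ with column sums $1$; $u_i(\mathbf z_i)=\sum_jv_{i,j}z_{i,j}$, $\mathbf u(\mathbf z)=(u_i(\mathbf z_i))_i$; $\mathcal U(\mathbf v)=\{\mathbf u(\mathbf z):\mathbf z\text{ allocation}\}$ and $\mathcal U^*(\mathbf v)$ the set of utility profiles of Pareto optimal allocations. $\mathbf z$ is competitive for $(\mathbf v,\mathbf b)$ if there exist prices $\mathbf p\in\mathbb R^m_{<0}$ such that each $\mathbf z_i$ maximizes $u_i$ over bundles $\mathbf x\in\mathbb R^m_{\ge0}$ with $\sum_jp_jx_j\le b_i$. A point $\mathbf u\in\mathcal U(\mathbf v)\cap\mathbb R^n_{<0}$ is a critical point of a smooth function $f$ on the convex set $\mathcal U(\mathbf v)$ if the tangent hyperplane at $\mathbf u$ to the level set of $f$ through $\mathbf u$ is a supporting hyperplane of $\mathcal U(\mathbf v)$. *)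

theory Defs
  imports "HOL-Analysis.Analysis"
begin

text \<open>Agents are the elements of a finite type 'n, chores the elements of a finite
  type 'm. Valuations v, budgets b, allocations z are real-valued functions;
  utility profiles are vectors in real^'n.\<close>

definition allocation :: "('n::finite \<Rightarrow> 'm::finite \<Rightarrow> real) \<Rightarrow> bool" where
  "allocation z \<longleftrightarrow> (\<forall>i j. z i j \<ge> 0) \<and> (\<forall>j. (\<Sum>i\<in>UNIV. z i j) = 1)"

definition util :: "('n::finite \<Rightarrow> 'm::finite \<Rightarrow> real) \<Rightarrow> 'n \<Rightarrow> ('m \<Rightarrow> real) \<Rightarrow> real" where
  "util v i x = (\<Sum>j\<in>UNIV. v i j * x j)"

definition uprof :: "('n::finite \<Rightarrow> 'm::finite \<Rightarrow> real) \<Rightarrow> ('n \<Rightarrow> 'm \<Rightarrow> real) \<Rightarrow> real^'n" where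
  "uprof v z = (\<chi> i. util v i (z i))"

definition utility_set :: "('n::finite \<Rightarrow> 'm::finite \<Rightarrow> real) \<Rightarrow> (real^'n) set" where
  "utility_set v = {uprof v z | z. allocation z}"

definition pareto_optimal :: "('n::finite \<Rightarrow> 'm::finite \<Rightarrow> real) \<Rightarrow> ('n \<Rightarrow> 'm \<Rightarrow> real) \<Rightarrow> bool" where
  "pareto_optimal v z \<longleftrightarrow> allocation z \<and>
     \<not> (\<exists>y. allocation y \<and> (\<forall>i. util v i (y i) \<ge> util v i (z i))
              \<and> (\<exists>i. util v i (y i) > util v i (z i)))"

definition pareto_frontier :: "('n::finite \<Rightarrow> 'm::finite \<Rightarrow> real) \<Rightarrow> (real^'n) set" where
  "pareto_frontier v = {uprof v z | z. pareto_optimal v z}"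

definition competitive :: "('n::finite \<Rightarrow> 'm::finite \<Rightarrow> real) \<Rightarrow> ('n \<Rightarrow> real) \<Rightarrow> ('n \<Rightarrow> 'm \<Rightarrow> real) \<Rightarrow> bool" where
  "competitive v b z \<longleftrightarrow> allocation z \<and>
     (\<exists>p :: 'm \<Rightarrow> real. (\<forall>j. p j < 0) \<and>
        (\<forall>i. (\<forall>j. z i j \<ge> 0) \<and> (\<Sum>j\<in>UNIV. p j * z i j) \<le> b i \<and>
             (\<forall>x :: 'm \<Rightarrow> real. (\<forall>j. x j \<ge> 0) \<and> (\<Sum>j\<in>UNIV. p j * x j) \<le> b i
                 \<longrightarrow> util v i x \<le> util v i (z i))))"

text \<open>Critical point of a smooth function f on a convex set U: the tangent hyperplane
  at u to the level set of f through u (normal = gradient g, which must be nonzero)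
  is a supporting hyperplane of U, i.e. U lies in one of its closed half-spaces.\<close>

definition critical_point :: "(real^'n::finite \<Rightarrow> real) \<Rightarrow> (real^'n) set \<Rightarrow> real^'n \<Rightarrow> bool" where
  "critical_point f U u \<longleftrightarrow> u \<in> U \<and> (\<forall>i. u $ i < 0) \<and>
     (\<exists>g. (f has_derivative (\<lambda>h. g \<bullet> h)) (at u) \<and> g \<noteq> 0 \<and>
          ((\<forall>w\<in>U. g \<bullet> (w - u) \<le> 0) \<or> (\<forall>w\<in>U. g \<bullet> (w - u) \<ge> 0)))"

definition nash_product :: "('n::finite \<Rightarrow> real) \<Rightarrow> real^'n \<Rightarrow> real" where
  "nash_product b u = (\<Prod>i\<in>UNIV. \<bar>u $ i\<bar> powr \<bar>b i\<bar>)"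

end

theory Submission
  imports Defs
begin

text \<open>With the weights \<open>\<tau>\<^sub>i = b\<^sub>i / u\<^sub>i(z) > 0\<close>, each condition says that every chore goes
  to an agent maximising \<open>\<tau>\<^sub>i v\<^sub>i\<^sub>j\<close>. The prices \<open>p\<^sub>j = max\<^sub>i \<tau>\<^sub>i v\<^sub>i\<^sub>j\<close> are a dual solution
  of the linear program maximising the \<open>\<tau>\<close>-weighted welfare over allocations, and complementary
  slackness yields both the equilibrium and the welfare maximum. The gradient of the Nash
  product at \<open>u(z)\<close> is a negative multiple of \<open>\<tau>\<close>, so a critical point either maximises or
  minimises the weighted welfare; in the minimising case a violation of the maximality
  condition would allow a two-chore exchange that is a Pareto improvement.\<close>

section \<open>Weighted welfare and transfers of chores\<close>

definition welfare :: "('n::finite \<Rightarrow> 'm::finite \<Rightarrow> real) \<Rightarrow> ('n \<Rightarrow> real) \<Rightarrow> ('n \<Rightarrow> 'm \<Rightarrow> real) \<Rightarrow> real" where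
  "welfare v tau y = (\<Sum>i\<in>UNIV. tau i * util v i (y i))"

definition chores_to_max_weighted :: "('n::finite \<Rightarrow> 'm::finite \<Rightarrow> real) \<Rightarrow> ('n \<Rightarrow> real) \<Rightarrow> ('n \<Rightarrow> 'm \<Rightarrow> real) \<Rightarrow> bool" where
  "chores_to_max_weighted v tau z \<longleftrightarrow> (\<forall>i j. z i j > 0 \<longrightarrow> (\<forall>i'. tau i' * v i' j \<le> tau i * v i j))"

definition transfer :: "('n \<Rightarrow> 'm \<Rightarrow> real) \<Rightarrow> 'n \<Rightarrow> 'n \<Rightarrow> 'm \<Rightarrow> real \<Rightarrow> 'n \<Rightarrow> 'm \<Rightarrow> real" where
  "transfer z i i' j t = (\<lambda>k l. z k l + (if l = j then (if k = i' then t else 0) - (if k = i then t else 0) else 0))"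

lemma uprof_nth [simp]: "uprof v y $ i = util v i (y i)"
  by (simp add: uprof_def)

lemma allocation_nonneg: "allocation z \<Longrightarrow> z i j \<ge> 0"
  by (simp add: allocation_def)

lemma util_neg:
  assumes "\<forall>j. v i j < 0" and "\<forall>j. x j \<ge> 0" and "x j > 0"
  shows "util v i x < 0"
proof -
  have "util v i x = v i j * x j + (\<Sum>l\<in>UNIV - {j}. v i l * x l)"
    unfolding util_def by (subst sum.remove[of UNIV j]) auto
  moreover have "(\<Sum>l\<in>UNIV - {j}. v i l * x l) \<le> 0"
    using assms by (intro sum_nonpos) (simp add: mult_nonpos_nonneg less_imp_le)
  moreover have "v i j * x j < 0"
    using assms by (simp add: mult_neg_pos)
  ultimately show ?thesis
    by linarith
qed

lemma util_nonzeroE: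
  assumes "util v i x \<noteq> 0"
  obtains j where "x j \<noteq> 0"
  using assms by (force simp: util_def)

lemma welfare_eq_double_sum: "welfare v tau y = (\<Sum>i\<in>UNIV. \<Sum>j\<in>UNIV. tau i * v i j * y i j)"
  by (simp add: welfare_def util_def sum_distrib_left mult.assoc)

lemma welfare_neg_weights: "welfare v (\<lambda>i. - tau i) y = - welfare v tau y"
  by (simp add: welfare_def sum_negf)

lemma allocation_transfer:
  assumes "allocation z" and "0 \<le> t" and "t \<le> z i j"
  shows "allocation (transfer z i i' j t)"
proof -
  have "(\<Sum>k\<in>UNIV. transfer z i i' j t k l) = (\<Sum>k\<in>UNIV. z k l)" for l
    by (cases "l = j") (simp_all add: transfer_def sum.distrib sum_subtractf)
  then show ?thesis
    using assms by (auto simp: allocation_def transfer_def)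
qed

lemma util_transfer:
  "util v k (transfer z i i' j t k)
     = util v k (z k) + (if k = i' then t * v i' j else 0) - (if k = i then t * v i j else 0)"
proof -
  have "util v k (transfer z i i' j t k)
      = util v k (z k) + (\<Sum>l\<in>UNIV. if l = j then v k j * ((if k = i' then t else 0) - (if k = i then t else 0)) else 0)"
    by (simp add: util_def transfer_def distrib_left sum.distrib if_distrib[of "\<lambda>x. v k _ * x"] cong: if_cong)
  then show ?thesis
    by (cases "k = i"; cases "k = i'") (simp_all add: algebra_simps)
qed

lemma welfare_transfer:
  "welfare v tau (transfer z i i' j t) = welfare v tau z + t * (tau i' * v i' j - tau i * v i j)"
proof -
  have pointwise: "tau k * util v k (transfer z i i' j t k) = tau k * util v k (z k)
      + (if k = i' then t * (tau i' * v i' j) else 0) - (if k = i then t * (tau i * v i j) else 0)" for k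
    by (auto simp: util_transfer algebra_simps)
  have "welfare v tau (transfer z i i' j t) = welfare v tau z
      + (\<Sum>k\<in>UNIV. if k = i' then t * (tau i' * v i' j) else 0) - (\<Sum>k\<in>UNIV. if k = i then t * (tau i * v i j) else 0)"
    unfolding welfare_def pointwise by (simp only: sum.distrib sum_subtractf)
  then show ?thesis
    by (simp add: algebra_simps)
qed

section \<open>Supporting prices and welfare maximisation\<close>

definition supporting_price :: "('n::finite \<Rightarrow> 'm \<Rightarrow> real) \<Rightarrow> ('n \<Rightarrow> real) \<Rightarrow> 'm \<Rightarrow> real" where
  "supporting_price v tau j = Max (range (\<lambda>i. tau i * v i j))"

lemma supporting_price_ge: "tau i * v i j \<le> supporting_price v tau j"
  by (simp add: supporting_price_def)

lemma supporting_price_eq: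
  assumes "chores_to_max_weighted v tau z" and "z i j > 0"
  shows "supporting_price v tau j = tau i * v i j"
  using assms unfolding supporting_price_def chores_to_max_weighted_def
  by (intro Max_eqI) auto

lemma supporting_price_neg:
  assumes "\<forall>i. tau i > 0" and "\<forall>i. v i j < 0"
  shows "supporting_price v tau j < 0"
proof -
  have "supporting_price v tau j \<in> range (\<lambda>i. tau i * v i j)"
    unfolding supporting_price_def by (intro Max_in) auto
  then obtain i where "supporting_price v tau j = tau i * v i j"
    by blast
  then show ?thesis
    using assms by (simp add: mult_pos_neg)
qed

lemma supporting_price_times_allocation:
  assumes "chores_to_max_weighted v tau z" and "allocation z"
  shows "supporting_price v tau j * z i j = tau i * v i j * z i j"
proof (cases "z i j > 0")
  case True
  then show ?thesis
    using assms(1) by (simp add: supporting_price_eq)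
next
  case False
  then show ?thesis
    using allocation_nonneg[OF assms(2), of i j] by simp
qed

lemma sum_prices_allocation:
  assumes "allocation y"
  shows "(\<Sum>i\<in>UNIV. \<Sum>j\<in>UNIV. p j * y i j) = (\<Sum>j\<in>UNIV. p j)"
proof -
  have "(\<Sum>i\<in>UNIV. \<Sum>j\<in>UNIV. p j * y i j) = (\<Sum>j\<in>UNIV. p j * (\<Sum>i\<in>UNIV. y i j))"
    by (subst sum.swap) (simp add: sum_distrib_left)
  then show ?thesis
    using assms by (simp add: allocation_def)
qed

lemma welfare_max_if_chores_to_max_weighted:
  assumes "chores_to_max_weighted v tau z" and "allocation z" and "allocation y"
  shows "welfare v tau y \<le> welfare v tau z"
proof -
  let ?p = "supporting_price v tau"
  have "welfare v tau y \<le> (\<Sum>i\<in>UNIV. \<Sum>j\<in>UNIV. ?p j * y i j)"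
    unfolding welfare_eq_double_sum
    using allocation_nonneg[OF assms(3)]
    by (intro sum_mono mult_right_mono supporting_price_ge) auto
  also have "\<dots> = (\<Sum>i\<in>UNIV. \<Sum>j\<in>UNIV. ?p j * z i j)"
    using assms(2,3) by (simp add: sum_prices_allocation)
  also have "\<dots> = welfare v tau z"
    unfolding welfare_eq_double_sum using assms(1,2) by (simp add: supporting_price_times_allocation)
  finally show ?thesis .
qed

lemma chores_to_max_weighted_if_welfare_max:
  assumes "allocation z" and max: "\<forall>y. allocation y \<longrightarrow> welfare v tau y \<le> welfare v tau z"
  shows "chores_to_max_weighted v tau z"
  unfolding chores_to_max_weighted_def
proof (intro allI impI)
  fix i j i'
  assume "z i j > 0"
  then have "welfare v tau (transfer z i i' j (z i j)) \<le> welfare v tau z"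
    using assms by (simp add: allocation_transfer)
  then have "z i j * (tau i' * v i' j - tau i * v i j) \<le> 0"
    by (simp add: welfare_transfer)
  with \<open>z i j > 0\<close> show "tau i' * v i' j \<le> tau i * v i j"
    by (simp add: mult_le_0_iff)
qed

lemma pareto_optimal_if_welfare_max:
  assumes "allocation z" and "\<forall>i. tau i > 0"
    and max: "\<forall>y. allocation y \<longrightarrow> welfare v tau y \<le> welfare v tau z"
  shows "pareto_optimal v z"
  unfolding pareto_optimal_def
proof (intro conjI notI assms(1))
  assume "\<exists>y. allocation y \<and> (\<forall>i. util v i (y i) \<ge> util v i (z i)) \<and> (\<exists>i. util v i (y i) > util v i (z i))"
  then obtain y where "allocation y" and "\<forall>i. util v i (y i) \<ge> util v i (z i)"
    and "\<exists>i. util v i (y i) > util v i (z i)"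
    by blast
  then have "welfare v tau z < welfare v tau y"
    unfolding welfare_def using assms(2)
    by (intro sum_strict_mono_ex1) (auto intro: mult_left_mono mult_strict_left_mono less_imp_le)
  with max \<open>allocation y\<close> show False
    by (meson not_le)
qed

lemma pareto_frontier_iff:
  assumes "allocation z"
  shows "uprof v z \<in> pareto_frontier v \<longleftrightarrow> pareto_optimal v z"
proof
  assume "uprof v z \<in> pareto_frontier v"
  then obtain z' where "uprof v z = uprof v z'" and "pareto_optimal v z'"
    unfolding pareto_frontier_def by blast
  with assms show "pareto_optimal v z"
    unfolding pareto_optimal_def by (metis uprof_nth)
qed (auto simp: pareto_frontier_def)

text \<open>Agent \<open>i\<close> hands \<open>s (-v i' j')\<close> of chore \<open>j\<close> to \<open>i'\<close> and takes back \<open>s (-v i' j)\<close> of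
  chore \<open>j'\<close>; this leaves \<open>i'\<close> indifferent and changes the utility of \<open>i\<close> by
  \<open>s (v i j v i' j' - v i' j v i j')\<close>.\<close>

lemma pareto_improving_exchange:
  assumes v_neg: "\<forall>i j. v i j < 0" and alloc: "allocation z"
    and "z i j > 0" and "z i' j' > 0"
    and cross: "v i' j * v i j' < v i j * v i' j'"
  obtains y where "allocation y" and "\<forall>k. util v k (z k) \<le> util v k (y k)"
    and "util v i (z i) < util v i (y i)"
proof -
  have "i \<noteq> i'" and "j \<noteq> j'"
    using cross by (auto simp: mult.commute)
  define s where "s = min (z i j / - v i' j') (z i' j' / - v i' j)"
  define e where "e = s * - v i' j'"
  define d where "d = s * - v i' j"
  have s_pos: "s > 0"
    unfolding s_def using assms by (simp add: divide_pos_neg)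
  have "e \<le> z i j"
  proof -
    have "s \<le> z i j / - v i' j'" and "0 < - v i' j'"
      using v_neg by (simp_all only: s_def min.cobounded1 neg_0_less_iff_less)
    then show ?thesis
      unfolding e_def by (metis pos_le_divide_eq)
  qed
  have "d \<le> z i' j'"
  proof -
    have "s \<le> z i' j' / - v i' j" and "0 < - v i' j"
      using v_neg by (simp_all only: s_def min.cobounded2 neg_0_less_iff_less)
    then show ?thesis
      unfolding d_def by (metis pos_le_divide_eq)
  qed
  have "e > 0" and "d > 0"
    unfolding e_def d_def using s_pos v_neg by (simp_all add: mult_pos_neg)
  define y where "y = transfer (transfer z i i' j e) i' i j' d"
  have "allocation (transfer z i i' j e)"
    using alloc \<open>e > 0\<close> \<open>e \<le> z i j\<close> by (intro allocation_transfer) auto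
  moreover have "transfer z i i' j e i' j' = z i' j'"
    using \<open>j \<noteq> j'\<close> by (simp add: transfer_def)
  ultimately have "allocation y"
    unfolding y_def using \<open>d > 0\<close> \<open>d \<le> z i' j'\<close> by (intro allocation_transfer[of "transfer z i i' j e"]) auto
  have util_y: "util v k (y k) = util v k (z k)
      + (if k = i then s * (v i j * v i' j' - v i' j * v i j') else 0)" for k
    using \<open>i \<noteq> i'\<close> by (auto simp: y_def util_transfer e_def d_def algebra_simps)
  have "s * (v i j * v i' j' - v i' j * v i j') > 0"
    using s_pos cross by simp
  with util_y \<open>allocation y\<close> show ?thesis
    using that by auto
qed

lemma chores_to_max_weighted_if_pareto_optimal:
  assumes v_neg: "\<forall>i j. v i j < 0" and tau_pos: "\<forall>i. tau i > 0"
    and util_neg: "\<forall>i. util v i (z i) < 0" and po: "pareto_optimal v z"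
    and min: "chores_to_max_weighted v (\<lambda>i. - tau i) z"
  shows "chores_to_max_weighted v tau z"
  unfolding chores_to_max_weighted_def
proof (intro allI impI, rule ccontr)
  fix i j i'
  assume "z i j > 0" and "\<not> tau i' * v i' j \<le> tau i * v i j"
  have alloc: "allocation z"
    using po by (simp add: pareto_optimal_def)
  obtain j' where "z i' j' \<noteq> 0"
    by (rule util_nonzeroE[of v i' "z i'"]) (use util_neg[rule_format, of i'] in auto)
  then have "z i' j' > 0"
    using allocation_nonneg[OF alloc, of i' j'] by simp
  then have "tau i' * v i' j' \<le> tau i * v i j'"
    using min unfolding chores_to_max_weighted_def by force
  have "(tau i * tau i') * (v i' j * v i j') < (tau i * tau i') * (v i j * v i' j')"
  proof -
    have "(- (tau i' * v i' j)) * (- (tau i * v i j')) < (- (tau i * v i j)) * (- (tau i' * v i' j'))"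
      using \<open>\<not> tau i' * v i' j \<le> tau i * v i j\<close> \<open>tau i' * v i' j' \<le> tau i * v i j'\<close> v_neg tau_pos
      by (intro mult_less_le_imp_less) (auto simp: mult_pos_neg less_imp_le)
    then show ?thesis
      by (simp add: algebra_simps)
  qed
  then have "v i' j * v i j' < v i j * v i' j'"
    using tau_pos by (simp add: mult_less_cancel_left_pos)
  then obtain y where "allocation y" and "\<forall>k. util v k (z k) \<le> util v k (y k)"
    and "util v i (z i) < util v i (y i)"
    using pareto_improving_exchange[OF v_neg alloc \<open>z i j > 0\<close> \<open>z i' j' > 0\<close>] by blast
  with po show False
    unfolding pareto_optimal_def by blast
qed

section \<open>Optimal bundles at negative prices\<close>

definition optimal_bundle :: "('n::finite \<Rightarrow> 'm::finite \<Rightarrow> real) \<Rightarrow> ('m \<Rightarrow> real) \<Rightarrow> real \<Rightarrow> 'n \<Rightarrow> ('m \<Rightarrow> real) \<Rightarrow> bool" where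
  "optimal_bundle v p budget i x \<longleftrightarrow> (\<forall>j. x j \<ge> 0) \<and> (\<Sum>j\<in>UNIV. p j * x j) \<le> budget \<and>
     (\<forall>x'. (\<forall>j. x' j \<ge> 0) \<and> (\<Sum>j\<in>UNIV. p j * x' j) \<le> budget \<longrightarrow> util v i x' \<le> util v i x)"

lemma competitive_iff_optimal_bundles:
  "competitive v b z \<longleftrightarrow>
     allocation z \<and> (\<exists>p. (\<forall>j. p j < 0) \<and> (\<forall>i. optimal_bundle v p (b i) i (z i)))"
  by (simp add: competitive_def optimal_bundle_def)

lemma optimal_bundle_nonneg: "optimal_bundle v p budget i x \<Longrightarrow> x j \<ge> 0"
  by (simp add: optimal_bundle_def)

lemma sum_mult_move:
  fixes f x :: "'m::finite \<Rightarrow> real"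
  shows "(\<Sum>l\<in>UNIV. f l * (x l - (if l = j then a else 0) + (if l = k then c else 0)))
     = (\<Sum>l\<in>UNIV. f l * x l) - f j * a + f k * c"
proof -
  have "(\<Sum>l\<in>UNIV. f l * (x l - (if l = j then a else 0) + (if l = k then c else 0)))
      = (\<Sum>l\<in>UNIV. f l * x l - (if l = j then f j * a else 0) + (if l = k then f k * c else 0))"
    by (intro sum.cong) (auto simp: algebra_simps)
  then show ?thesis
    by (simp add: sum.distrib sum_subtractf)
qed

context
  fixes v :: "'n::finite \<Rightarrow> 'm::finite \<Rightarrow> real" and p :: "'m \<Rightarrow> real" and budget :: real
    and i :: 'n and x :: "'m \<Rightarrow> real"
  assumes v_neg: "\<forall>j. v i j < 0" and p_neg: "\<forall>j. p j < 0" and budget_neg: "budget < 0"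
    and opt: "optimal_bundle v p budget i x"
begin

lemma optimal_bundle_util_neg: "util v i x < 0"
proof -
  have "(\<Sum>j\<in>UNIV. p j * x j) \<noteq> 0"
    using opt budget_neg by (auto simp: optimal_bundle_def)
  then obtain j where "p j * x j \<noteq> 0"
    by (rule sum.not_neutral_contains_not_neutral)
  with optimal_bundle_nonneg[OF opt, of j] have "x j > 0"
    by (simp add: order_neq_le_trans)
  then show ?thesis
    using util_neg v_neg optimal_bundle_nonneg[OF opt] by blast
qed

text \<open>Test bundle: spend the whole budget on chore \<open>j\<close>.\<close>

lemma optimal_bundle_price_lower: "v i j * budget / util v i x \<le> p j"
proof -
  define x' where "x' = (\<lambda>l. if l = j then budget / p j else 0)"
  have "\<forall>l. x' l \<ge> 0"
    unfolding x'_def using p_neg budget_neg by (simp add: divide_nonpos_neg less_imp_le)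
  moreover have "(\<Sum>l\<in>UNIV. p l * x' l) = budget"
    unfolding x'_def using p_neg[rule_format, of j] by (simp add: if_distrib cong: if_cong)
  ultimately have "util v i x' \<le> util v i x"
    using opt by (simp add: optimal_bundle_def)
  moreover have "util v i x' = v i j * budget / p j"
    unfolding util_def x'_def by (simp add: if_distrib cong: if_cong)
  ultimately have "util v i x * p j \<le> v i j * budget"
    using neg_divide_le_eq[of "p j"] p_neg by simp
  then show ?thesis
    by (simp add: neg_divide_le_eq[OF optimal_bundle_util_neg] mult.commute)
qed

text \<open>Test bundle: trade the share of chore \<open>j\<close> for chore \<open>k\<close> at the same cost.\<close>

lemma optimal_bundle_bang_per_buck:
  assumes "x j > 0"
  shows "v i j / p j \<le> v i k / p k"
proof -
  define c where "c = x j * p j / p k"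
  define x' where "x' = (\<lambda>l. x l - (if l = j then x j else 0) + (if l = k then c else 0))"
  have "c \<ge> 0"
    unfolding c_def using assms p_neg by (simp add: divide_nonpos_neg mult_nonneg_nonpos less_imp_le)
  then have "\<forall>l. x' l \<ge> 0"
    unfolding x'_def using optimal_bundle_nonneg[OF opt] by auto
  moreover have "(\<Sum>l\<in>UNIV. p l * x' l) = (\<Sum>l\<in>UNIV. p l * x l)"
    unfolding x'_def sum_mult_move using p_neg[rule_format, of k] by (simp add: c_def)
  ultimately have "util v i x' \<le> util v i x"
    using opt by (auto simp: optimal_bundle_def)
  moreover have "util v i x' = util v i x - v i j * x j + v i k * c"
    unfolding x'_def util_def sum_mult_move ..
  ultimately have "x j * (v i k * p j / p k) \<le> x j * v i j"
    by (simp add: c_def algebra_simps)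
  then have "v i k * p j / p k \<le> v i j"
    using assms by (metis mult_le_cancel_left_pos times_divide_eq_right)
  then show ?thesis
    by (simp add: neg_divide_le_eq[OF p_neg[rule_format, of j]])
qed

lemma optimal_bundle_price_upper:
  assumes "x j > 0"
  shows "p j \<le> v i j * budget / util v i x"
proof -
  have "v i k \<le> v i j / p j * p k" for k
    using optimal_bundle_bang_per_buck[OF assms, of k] p_neg[rule_format, of k]
    by (simp add: neg_le_divide_eq)
  then have "util v i x \<le> (\<Sum>k\<in>UNIV. v i j / p j * p k * x k)"
    unfolding util_def using optimal_bundle_nonneg[OF opt] by (intro sum_mono mult_right_mono) auto
  also have "\<dots> = v i j / p j * (\<Sum>k\<in>UNIV. p k * x k)"
    by (simp add: sum_distrib_left mult.assoc)
  also have "\<dots> \<le> v i j / p j * budget"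
    using opt p_neg v_neg by (intro mult_left_mono) (auto simp: optimal_bundle_def divide_neg_neg less_imp_le)
  finally have "v i j * budget \<le> util v i x * p j"
    by (simp add: neg_le_divide_eq[OF p_neg[rule_format, of j]])
  then show ?thesis
    by (simp add: neg_le_divide_eq[OF optimal_bundle_util_neg] mult.commute)
qed

end

lemma optimal_bundle_if_price_bounds:
  fixes v :: "'n::finite \<Rightarrow> 'm::finite \<Rightarrow> real"
  assumes "\<forall>j. x j \<ge> 0" and "(\<Sum>j\<in>UNIV. p j * x j) \<le> budget" and "budget < 0"
    and "util v i x < 0" and "\<forall>j. v i j * budget / util v i x \<le> p j"
  shows "optimal_bundle v p budget i x"
  unfolding optimal_bundle_def
proof (intro conjI assms(1,2) allI impI)
  fix x' :: "'m \<Rightarrow> real"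
  assume x': "(\<forall>j. x' j \<ge> 0) \<and> (\<Sum>j\<in>UNIV. p j * x' j) \<le> budget"
  define r where "r = util v i x / budget"
  have "r > 0"
    unfolding r_def using assms(3,4) by (simp add: divide_neg_neg)
  have "v i j \<le> p j * r" for j
  proof -
    have "v i j = v i j * budget / util v i x * r"
      using assms(3,4) by (simp add: r_def)
    also have "\<dots> \<le> p j * r"
      using assms(5) \<open>r > 0\<close> by (intro mult_right_mono) auto
    finally show ?thesis .
  qed
  then have "util v i x' \<le> (\<Sum>j\<in>UNIV. p j * r * x' j)"
    unfolding util_def using x' by (intro sum_mono mult_right_mono) auto
  also have "\<dots> = r * (\<Sum>j\<in>UNIV. p j * x' j)"
    by (simp add: sum_distrib_left mult_ac)
  also have "\<dots> \<le> r * budget"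
    using x' \<open>r > 0\<close> by (simp add: mult_left_mono)
  also have "\<dots> = util v i x"
    using assms(3) by (simp add: r_def)
  finally show "util v i x' \<le> util v i x" .
qed

lemma competitive_imp_chores_to_max_weighted:
  assumes v_neg: "\<forall>i j. v i j < 0" and b_neg: "\<forall>i. b i < 0" and "competitive v b z"
  shows "(\<forall>i. util v i (z i) < 0) \<and> chores_to_max_weighted v (\<lambda>i. b i / util v i (z i)) z"
proof -
  obtain p where p_neg: "\<forall>j. p j < 0" and opt: "\<forall>i. optimal_bundle v p (b i) i (z i)"
    using assms(3) by (auto simp: competitive_iff_optimal_bundles)
  note bundle_facts = optimal_bundle_util_neg optimal_bundle_price_lower optimal_bundle_price_upper
  have "\<forall>i. util v i (z i) < 0"
    using bundle_facts(1) v_neg p_neg b_neg opt by blast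
  moreover have "b i' / util v i' (z i') * v i' j \<le> b i / util v i (z i) * v i j"
    if "z i j > 0" for i j i'
    using bundle_facts(2)[of v i' p "b i'" "z i'" j] bundle_facts(3)[of v i p "b i" "z i" j]
      v_neg p_neg b_neg opt that by (simp add: mult.commute)
  ultimately show ?thesis
    unfolding chores_to_max_weighted_def by blast
qed

lemma competitive_if_chores_to_max_weighted:
  assumes v_neg: "\<forall>i j. v i j < 0" and b_neg: "\<forall>i. b i < 0" and alloc: "allocation z"
    and util_neg: "\<forall>i. util v i (z i) < 0"
    and max: "chores_to_max_weighted v tau z" and tau: "tau = (\<lambda>i. b i / util v i (z i))"
  shows "competitive v b z"
proof -
  let ?p = "supporting_price v tau"
  have tau_pos: "\<forall>i. tau i > 0"
    unfolding tau using b_neg util_neg by (simp add: divide_neg_neg)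
  have "optimal_bundle v ?p (b i) i (z i)" for i
  proof (rule optimal_bundle_if_price_bounds)
    have "(\<Sum>j\<in>UNIV. ?p j * z i j) = tau i * util v i (z i)"
      using max alloc by (simp add: supporting_price_times_allocation util_def sum_distrib_left mult.assoc)
    also have "\<dots> = b i"
      using util_neg[rule_format, of i] by (simp add: tau)
    finally show "(\<Sum>j\<in>UNIV. ?p j * z i j) \<le> b i"
      by simp
    have "v i j * b i / util v i (z i) = tau i * v i j" for j
      by (simp add: tau mult.commute)
    then show "\<forall>j. v i j * b i / util v i (z i) \<le> ?p j"
      by (simp add: supporting_price_ge)
    show "\<forall>j. z i j \<ge> 0"
      using alloc by (simp add: allocation_nonneg)
  qed (use b_neg util_neg in auto)
  moreover have "?p j < 0" for j
    using tau_pos v_neg by (simp add: supporting_price_neg)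
  ultimately show ?thesis
    unfolding competitive_iff_optimal_bundles using alloc by blast
qed

section \<open>Critical points of the Nash product\<close>

lemma has_derivative_abs_powr_nth:
  fixes u :: "real^'n::finite"
  assumes "u $ i < 0"
  shows "((\<lambda>w. \<bar>w $ i\<bar> powr c) has_derivative (\<lambda>h. \<bar>u $ i\<bar> powr c * (h $ i * c / u $ i))) (at u)"
proof -
  have "((\<lambda>w. (- (w $ i)) powr c) has_derivative
      (\<lambda>h. (- (u $ i)) powr c * (0 * ln (- (u $ i)) + - (h $ i) * c / - (u $ i)))) (at u)"
    using assms by (intro has_derivative_powr derivative_intros bounded_linear_imp_has_derivative bounded_linear_vec_nth) auto
  then have "((\<lambda>w. (- (w $ i)) powr c) has_derivative (\<lambda>h. \<bar>u $ i\<bar> powr c * (h $ i * c / u $ i))) (at u)"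
    using assms by simp
  moreover have "open {w::real^'n. w $ i < 0}"
    by (intro open_Collect_less continuous_intros)
  ultimately show ?thesis
    by (rule has_derivative_transform_within_open) (use assms in auto)
qed

lemma nash_product_pos:
  assumes "\<forall>i. u $ i \<noteq> 0"
  shows "nash_product b u > 0"
  unfolding nash_product_def using assms by (intro prod_pos) simp

lemma nash_product_has_derivative:
  fixes u :: "real^'n::finite"
  assumes "\<forall>i. u $ i < 0"
  shows "(nash_product b has_derivative (\<lambda>h. (\<chi> i. nash_product b u * \<bar>b i\<bar> / u $ i) \<bullet> h)) (at u)"
proof -
  let ?f = "\<lambda>i. \<bar>u $ i\<bar> powr \<bar>b i\<bar>"
  have "((\<lambda>w. \<Prod>i\<in>UNIV. \<bar>w $ i\<bar> powr \<bar>b i\<bar>) has_derivative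
      (\<lambda>h. \<Sum>i\<in>UNIV. ?f i * (h $ i * \<bar>b i\<bar> / u $ i) * (\<Prod>j\<in>UNIV - {i}. ?f j))) (at u)"
    using assms by (intro has_derivative_prod has_derivative_abs_powr_nth) auto
  moreover have "?f i * (\<Prod>j\<in>UNIV - {i}. ?f j) = nash_product b u" for i
    unfolding nash_product_def by (subst prod.remove[of UNIV i]) auto
  then have "(\<Sum>i\<in>UNIV. ?f i * (h $ i * \<bar>b i\<bar> / u $ i) * (\<Prod>j\<in>UNIV - {i}. ?f j))
      = (\<chi> i. nash_product b u * \<bar>b i\<bar> / u $ i) \<bullet> h" for h
    unfolding inner_vec_def inner_real_def by (intro sum.cong) (auto simp: algebra_simps)
  ultimately show ?thesis
    unfolding nash_product_def[abs_def] by simp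
qed

lemma critical_point_iff_gradient:
  assumes "(f has_derivative (\<lambda>h. g \<bullet> h)) (at u)"
  shows "critical_point f U u \<longleftrightarrow> u \<in> U \<and> (\<forall>i. u $ i < 0) \<and> g \<noteq> 0 \<and>
     ((\<forall>w\<in>U. g \<bullet> (w - u) \<le> 0) \<or> (\<forall>w\<in>U. g \<bullet> (w - u) \<ge> 0))"
proof -
  have "g' = g" if "(f has_derivative (\<lambda>h. g' \<bullet> h)) (at u)" for g'
  proof -
    have "(\<lambda>h. g' \<bullet> h) = (\<lambda>h. g \<bullet> h)"
      by (rule has_derivative_unique[OF that assms])
    then have "(g' - g) \<bullet> (g' - g) = 0"
      by (metis inner_diff_left right_minus_eq)
    then show ?thesis
      by simp
  qed
  then show ?thesis
    unfolding critical_point_def using assms by blast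
qed

lemma inner_uprof_diff:
  "(\<chi> i. tau i) \<bullet> (uprof v y - uprof v z) = welfare v tau y - welfare v tau z"
  by (simp add: inner_vec_def welfare_def algebra_simps sum_subtractf)

lemma ball_utility_set: "(\<forall>w\<in>utility_set v. P w) \<longleftrightarrow> (\<forall>y. allocation y \<longrightarrow> P (uprof v y))"
  by (auto simp: utility_set_def)

lemma nash_critical_point_iff_welfare_extremal:
  assumes b_neg: "\<forall>i. b i < 0" and alloc: "allocation z" and util_neg: "\<forall>i. util v i (z i) < 0"
    and tau: "tau = (\<lambda>i. b i / util v i (z i))"
  shows "critical_point (nash_product b) (utility_set v) (uprof v z) \<longleftrightarrow>
     (\<forall>y. allocation y \<longrightarrow> welfare v tau y \<le> welfare v tau z) \<or>
     (\<forall>y. allocation y \<longrightarrow> welfare v tau z \<le> welfare v tau y)"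
proof -
  let ?u = "uprof v z"
  let ?N = "nash_product b ?u"
  let ?g = "- ?N *\<^sub>R (\<chi> i. tau i)"
  have "?N > 0"
    using util_neg by (intro nash_product_pos) (simp add: less_imp_neq)
  have gradient: "(\<chi> i. ?N * \<bar>b i\<bar> / ?u $ i) = ?g"
    using b_neg by (simp add: vec_eq_iff tau abs_of_neg)
  have "tau i \<noteq> 0" for i
    using b_neg[rule_format, of i] util_neg[rule_format, of i] by (simp add: tau)
  then have "?g \<noteq> 0"
    using \<open>?N > 0\<close> by (metis scaleR_eq_0_iff neg_equal_0_iff_equal less_irrefl vec_lambda_beta zero_index)
  moreover have "\<forall>i. ?u $ i < 0"
    using util_neg by simp
  moreover have "(nash_product b has_derivative (\<lambda>h. ?g \<bullet> h)) (at ?u)"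
    using nash_product_has_derivative[of ?u b] util_neg by (simp only: gradient) simp
  moreover have "?u \<in> utility_set v"
    unfolding utility_set_def using alloc by blast
  ultimately have "critical_point (nash_product b) (utility_set v) ?u \<longleftrightarrow>
      (\<forall>w\<in>utility_set v. ?g \<bullet> (w - ?u) \<le> 0) \<or> (\<forall>w\<in>utility_set v. ?g \<bullet> (w - ?u) \<ge> 0)"
    using critical_point_iff_gradient by blast
  moreover have "?g \<bullet> (uprof v y - ?u) \<le> 0 \<longleftrightarrow> welfare v tau z \<le> welfare v tau y"
    and "?g \<bullet> (uprof v y - ?u) \<ge> 0 \<longleftrightarrow> welfare v tau y \<le> welfare v tau z" for y
    using \<open>?N > 0\<close> by (simp_all add: inner_uprof_diff mult_le_0_iff zero_le_mult_iff)
  ultimately show ?thesis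
    unfolding ball_utility_set by blast
qed

lemma welfare_max_iff_pareto_nash_critical:
  assumes v_neg: "\<forall>i j. v i j < 0" and b_neg: "\<forall>i. b i < 0" and alloc: "allocation z"
    and util_neg: "\<forall>i. util v i (z i) < 0" and tau: "tau = (\<lambda>i. b i / util v i (z i))"
  shows "(\<forall>y. allocation y \<longrightarrow> welfare v tau y \<le> welfare v tau z) \<longleftrightarrow>
     pareto_optimal v z \<and> critical_point (nash_product b) (utility_set v) (uprof v z)"
proof -
  have tau_pos: "\<forall>i. tau i > 0"
    unfolding tau using b_neg util_neg by (simp add: divide_neg_neg)
  note critical_iff = nash_critical_point_iff_welfare_extremal[OF b_neg alloc util_neg tau]
  have "\<forall>y. allocation y \<longrightarrow> welfare v tau y \<le> welfare v tau z"
    if po: "pareto_optimal v z" and min: "\<forall>y. allocation y \<longrightarrow> welfare v tau z \<le> welfare v tau y"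
  proof -
    have "chores_to_max_weighted v (\<lambda>i. - tau i) z"
      using alloc min by (intro chores_to_max_weighted_if_welfare_max) (auto simp only: welfare_neg_weights neg_le_iff_le)
    then have "chores_to_max_weighted v tau z"
      using chores_to_max_weighted_if_pareto_optimal v_neg tau_pos util_neg po by blast
    then show ?thesis
      using alloc welfare_max_if_chores_to_max_weighted by blast
  qed
  then show ?thesis
    using critical_iff pareto_optimal_if_welfare_max[OF alloc tau_pos] by blast
qed

theorem proposition7:
  fixes v :: "'n::finite \<Rightarrow> 'm::finite \<Rightarrow> real"
    and b :: "'n \<Rightarrow> real"
    and z :: "'n \<Rightarrow> 'm \<Rightarrow> real"
  assumes v_neg: "\<forall>i j. v i j < 0"
    and b_neg: "\<forall>i. b i < 0"
    and alloc: "allocation z"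
  defines "tau \<equiv> (\<lambda>i. b i / util v i (z i))"
  shows "(competitive v b z
           \<longleftrightarrow> ((\<forall>i. util v i (z i) < 0) \<and>
                (\<forall>i j. z i j > 0 \<longrightarrow> (\<forall>i'. v i j * b i / util v i (z i)
                                              \<ge> v i' j * b i' / util v i' (z i')))))
       \<and> (competitive v b z
           \<longleftrightarrow> ((\<forall>i. util v i (z i) < 0) \<and>
                (\<forall>y. allocation y \<longrightarrow>
                   (\<Sum>i\<in>UNIV. tau i * util v i (y i)) \<le> (\<Sum>i\<in>UNIV. tau i * util v i (z i)))))
       \<and> (competitive v b z
           \<longleftrightarrow> ((\<forall>i. util v i (z i) < 0) \<and> uprof v z \<in> pareto_frontier v \<and>
                critical_point (nash_product b) (utility_set v) (uprof v z)))"
proof -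
  let ?U = "\<forall>i. util v i (z i) < 0"
  let ?welfare_max = "\<forall>y. allocation y \<longrightarrow> welfare v tau y \<le> welfare v tau z"
  have tau: "tau = (\<lambda>i. b i / util v i (z i))"
    by (simp add: tau_def)
  have weighted_values: "chores_to_max_weighted v tau z \<longleftrightarrow>
      (\<forall>i j. z i j > 0 \<longrightarrow> (\<forall>i'. v i j * b i / util v i (z i) \<ge> v i' j * b i' / util v i' (z i')))"
    unfolding chores_to_max_weighted_def tau by (simp add: mult.commute)
  have competitive: "competitive v b z \<longleftrightarrow> ?U \<and> chores_to_max_weighted v tau z"
    using competitive_imp_chores_to_max_weighted[OF v_neg b_neg]
      competitive_if_chores_to_max_weighted[OF v_neg b_neg alloc _ _ tau] tau by blast
  moreover have "?U \<and> chores_to_max_weighted v tau z \<longleftrightarrow> ?U \<and> ?welfare_max"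
    using welfare_max_if_chores_to_max_weighted[OF _ alloc] chores_to_max_weighted_if_welfare_max[OF alloc]
    by blast
  moreover have "?U \<and> ?welfare_max \<longleftrightarrow>
      ?U \<and> uprof v z \<in> pareto_frontier v \<and> critical_point (nash_product b) (utility_set v) (uprof v z)"
    using welfare_max_iff_pareto_nash_critical[OF v_neg b_neg alloc _ tau] pareto_frontier_iff[OF alloc]
    by blast
  ultimately show ?thesis
    unfolding weighted_values welfare_def by blast
qed

end
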